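(* In the power control setting described in the context, for every $i\in\mathcal{K}$, $u_i(\tilde{\underline{p}})\ge u_i(\underline{p}^* )$, where $\underline{p}^*=(p_1^*,\dots,p_K^* )$.
   Context: There are $K\ge2$ transmitters $i\in\mathcal{K}=\{1,\dots,K\}$; $\sigma^2>0$ is the noise variance; transmitter $i$ has channel gain $g_i$ with $|g_i|^2>0$, rate $R_i>0$, and power $p_i\in[0,P_i^{\max}]$. For a power profile $\underline{p}$, $\mathrm{SINR}_i=\frac{p_i|g_i|^2}{\sum_{j\neq i}p_j|g_j|^2+\sigma^2}$ and $u_i(\underline{p})=\frac{R_i f(\mathrm{SINR}_i)}{p_i}$, where $f$ is a common sigmoidal efficiency function with $f(0)=0$. Let $\beta^*$ be the unique positive solution of $xf'(x)-f(x)=0$, assumed to satisfy $(K-1)\beta^*<1$; the one-shot Nash equilibrium is $p_i^*=\frac{\sigma^2}{|g_i|^2}\frac{\beta^*}{1-(K-1)\beta^*}$ (all users get SINR $\beta^*$). It is assumed that there exists $x_0\in]0,\frac1{K-1}[$ such that $\frac{f''(x)}{f'(x)}-\frac{2(K-1)}{1-(K-1)x}$ is strictly positive on $]0,x_0[$ and strictly negative on $]x_0,\frac1{K-1}[$; then $\tilde\gamma$ is the unique solution in $]0,\frac1{K-1}[$ of $x[1-(K-1)x]f'(x)-f(x)=0$, and the operating point is $\tilde p_i=\frac{\sigma^2}{|g_i|^2}\frac{\tilde\gamma}{1-(K-1)\tilde\gamma}$ (all users get SINR $\tilde\gamma$). The maximal powers are large enough that $p_i^*,\tilde p_i\le P_i^{\max}$.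 *)

theory Defs
  imports "HOL-Analysis.Analysis"
begin

definition sigmoidal :: "(real \<Rightarrow> real) \<Rightarrow> (real \<Rightarrow> real) \<Rightarrow> (real \<Rightarrow> real) \<Rightarrow> bool" where
  "sigmoidal f f' f'' \<longleftrightarrow>
     f 0 = 0 \<and> continuous_on {0..} f \<and>
     (\<forall>x>0. (f has_real_derivative f' x) (at x) \<and> (f' has_real_derivative f'' x) (at x)) \<and>
     (\<forall>x>0. f' x > 0) \<and>
     (\<exists>a>0. (\<forall>x\<in>{0<..<a}. f'' x > 0) \<and> (\<forall>x>a. f'' x < 0)) \<and>
     (f \<longlongrightarrow> 1) at_top"

text \<open>Users are indexed by {1..K}; g i is the complex channel gain, s2 the noise variance.\<close>
definition SINR :: "nat \<Rightarrow> real \<Rightarrow> (nat \<Rightarrow> complex) \<Rightarrow> (nat \<Rightarrow> real) \<Rightarrow> nat \<Rightarrow> real" where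
  "SINR K s2 g p i =
     p i * (cmod (g i))\<^sup>2 / ((\<Sum>j\<in>{1..K} - {i}. p j * (cmod (g j))\<^sup>2) + s2)"

definition utility :: "nat \<Rightarrow> real \<Rightarrow> (nat \<Rightarrow> complex) \<Rightarrow> (nat \<Rightarrow> real) \<Rightarrow> (real \<Rightarrow> real)
    \<Rightarrow> (nat \<Rightarrow> real) \<Rightarrow> nat \<Rightarrow> real" where
  "utility K s2 g R f p i = R i * f (SINR K s2 g p i) / p i"

end

theory Submission
  imports Defs
begin

text \<open>When every user receives the same SINR x, user i's utility is R i |g i|^2 / \<sigma>^2 times
  the common factor f(x)(1 - (K-1)x)/x, so it suffices to compare this factor at \<gamma> and at \<beta>.
  Its derivative has the sign of (the efficiency slope) \<phi>(x) = x(1-(K-1)x) f'(x) - f(x). The hypothesis on f''/f' says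
  exactly that \<phi>' > 0 before x0 and \<phi>' < 0 after it; since \<phi> > -f \<rightarrow> 0 at the right of 0, \<phi> is positive
  up to x0, so its root \<gamma> lies in the decreasing part. As \<phi>(\<beta>) = -(K-1)\<beta>^2 f'(\<beta>) < 0, \<beta> lies
  beyond \<gamma>, where \<phi> < 0 and the factor decreases.\<close>

definition efficiency :: "real \<Rightarrow> (real \<Rightarrow> real) \<Rightarrow> real \<Rightarrow> real" where
  "efficiency k f x = f x * (1 - k * x) / x"

definition efficiency_slope :: "real \<Rightarrow> (real \<Rightarrow> real) \<Rightarrow> (real \<Rightarrow> real) \<Rightarrow> real \<Rightarrow> real" where
  "efficiency_slope k f f' x = x * (1 - k * x) * f' x - f x"

lemma efficiency_has_derivative:
  assumes "(f has_real_derivative f' x) (at x)" "x \<noteq> 0"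
  shows "(efficiency k f has_real_derivative efficiency_slope k f f' x / x\<^sup>2) (at x)"
proof -
  have "(efficiency k f has_real_derivative
           ((f' x * (1 - k * x) + f x * (0 - k * 1)) * x - f x * (1 - k * x) * 1) / (x * x)) (at x)"
    unfolding efficiency_def by (rule derivative_eq_intros refl assms | simp add: assms)+
  then show ?thesis
    by (simp add: efficiency_slope_def algebra_simps power2_eq_square)
qed

lemma efficiency_slope_has_derivative:
  assumes "(f has_real_derivative f' x) (at x)" "(f' has_real_derivative f'' x) (at x)"
  shows "(efficiency_slope k f f' has_real_derivative
           x * (1 - k * x) * f'' x - 2 * k * x * f' x) (at x)"
proof -
  have "(efficiency_slope k f f' has_real_derivative
           (1 * (1 - k * x) + x * (0 - k * 1)) * f' x + x * (1 - k * x) * f'' x - f' x) (at x)"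
    unfolding efficiency_slope_def by (rule derivative_eq_intros refl assms | simp)+
  then show ?thesis by (simp add: algebra_simps)
qed

lemma pos_if_strict_mono_and_liminf_nonneg:
  fixes \<phi> :: "real \<Rightarrow> real"
  assumes mono: "\<And>s t. 0 < s \<Longrightarrow> s < t \<Longrightarrow> t \<le> a \<Longrightarrow> \<phi> s < \<phi> t"
    and liminf: "\<And>\<epsilon>. \<epsilon> > 0 \<Longrightarrow> \<forall>\<^sub>F t in at_right 0. - \<epsilon> < \<phi> t"
    and x: "0 < x" "x \<le> a"
  shows "\<phi> x > 0"
proof (rule ccontr)
  assume "\<not> \<phi> x > 0"
  then have neg: "\<phi> (x / 2) < 0"
    using mono[of "x / 2" x] x by simp
  have "\<forall>\<^sub>F t in at_right 0. \<phi> (x / 2) < \<phi> t"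
    using liminf[of "- \<phi> (x / 2)"] neg by simp
  moreover have "\<forall>\<^sub>F t in at_right 0. 0 < t \<and> t < x / 2"
    using eventually_at_right_real[of 0 "x / 2"] x by simp
  ultimately have "\<forall>\<^sub>F t in at_right 0. \<phi> (x / 2) < \<phi> t \<and> 0 < t \<and> t < x / 2"
    by (rule eventually_conj)
  then obtain t where "\<phi> (x / 2) < \<phi> t" "0 < t" "t < x / 2"
    using eventually_happens' trivial_limit_at_right_real by blast
  then show False using mono[of t "x / 2"] x by simp
qed

context
  fixes k x0 :: real and f f' f'' :: "real \<Rightarrow> real"
  assumes k_pos: "k > 0"
    and derivs: "\<And>x. x > 0 \<Longrightarrow>
           (f has_real_derivative f' x) (at x) \<and> (f' has_real_derivative f'' x) (at x)"
    and f'_pos: "\<And>x. x > 0 \<Longrightarrow> f' x > 0"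
    and f_tendsto_0: "(f \<longlongrightarrow> 0) (at_right 0)"
    and x0: "x0 \<in> {0<..<1 / k}"
    and convex_part: "\<forall>x\<in>{0<..<x0}. f'' x / f' x - 2 * k / (1 - k * x) > 0"
    and concave_part: "\<forall>x\<in>{x0<..<1 / k}. f'' x / f' x - 2 * k / (1 - k * x) < 0"
begin

lemma interference_factor_pos: "x < 1 / k \<Longrightarrow> 1 - k * x > 0"
  using k_pos by (simp add: field_simps)

lemma efficiency_slope_derivative_factor:
  assumes "0 < x" "x < 1 / k"
  shows "x * (1 - k * x) * f'' x - 2 * k * x * f' x
       = x * (1 - k * x) * f' x * (f'' x / f' x - 2 * k / (1 - k * x))"
  using f'_pos[of x] interference_factor_pos[of x] assms
  by (simp add: field_simps)

lemma efficiency_slope_continuous: "0 < s \<Longrightarrow> continuous_on {s..t} (efficiency_slope k f f')"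
  by (intro continuous_at_imp_continuous_on ballI)
    (metis DERIV_isCont atLeastAtMost_iff derivs efficiency_slope_has_derivative order_less_le_trans)

lemma efficiency_continuous: "0 < s \<Longrightarrow> continuous_on {s..t} (efficiency k f)"
  by (intro continuous_at_imp_continuous_on ballI)
    (metis DERIV_isCont atLeastAtMost_iff derivs efficiency_has_derivative order_less_le_trans
      less_numeral_extra(3))

lemma efficiency_slope_strict_mono:
  assumes "0 < s" "s < t" "t \<le> x0"
  shows "efficiency_slope k f f' s < efficiency_slope k f f' t"
proof (rule DERIV_pos_imp_increasing_open[OF \<open>s < t\<close> _ efficiency_slope_continuous])
  fix x assume x: "s < x" "x < t"
  then have "0 < x" "x < x0" "x < 1 / k" using assms x0 by auto
  then have "x * (1 - k * x) * f'' x - 2 * k * x * f' x > 0"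
    using efficiency_slope_derivative_factor convex_part f'_pos interference_factor_pos by simp
  then show "\<exists>y. (efficiency_slope k f f' has_real_derivative y) (at x) \<and> y > 0"
    using efficiency_slope_has_derivative derivs \<open>0 < x\<close> by blast
qed (use assms in auto)

lemma efficiency_slope_strict_antimono:
  assumes "x0 \<le> s" "s < t" "t < 1 / k"
  shows "efficiency_slope k f f' t < efficiency_slope k f f' s"
proof (rule DERIV_neg_imp_decreasing_open[OF \<open>s < t\<close> _ efficiency_slope_continuous])
  fix x assume x: "s < x" "x < t"
  then have "0 < x" "x0 < x" "x < 1 / k" using assms x0 by auto
  then have "x * (1 - k * x) * f'' x - 2 * k * x * f' x < 0"
    using efficiency_slope_derivative_factor concave_part f'_pos interference_factor_pos
    by (simp add: mult_pos_neg)
  then show "\<exists>y. (efficiency_slope k f f' has_real_derivative y) (at x) \<and> y < 0"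
    using efficiency_slope_has_derivative derivs \<open>0 < x\<close> by blast
qed (use assms x0 in auto)

lemma efficiency_slope_pos_below_x0:
  assumes "0 < x" "x \<le> x0"
  shows "efficiency_slope k f f' x > 0"
proof (rule pos_if_strict_mono_and_liminf_nonneg[OF efficiency_slope_strict_mono _ assms])
  fix \<epsilon> :: real assume "\<epsilon> > 0"
  then have "\<forall>\<^sub>F t in at_right 0. - \<epsilon> < - f t"
    using f_tendsto_0 by (auto simp: tendsto_iff dist_real_def elim!: eventually_mono)
  moreover have "\<forall>\<^sub>F t in at_right 0. 0 < t \<and> t < 1 / k"
    using eventually_at_right_real[of 0 "1 / k"] k_pos by simp
  ultimately show "\<forall>\<^sub>F t in at_right 0. - \<epsilon> < efficiency_slope k f f' t"
  proof eventually_elim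
    case (elim t)
    then have "t * (1 - k * t) * f' t > 0"
      using f'_pos interference_factor_pos by simp
    then show ?case using elim by (simp add: efficiency_slope_def)
  qed
qed

lemma efficiency_le_at_slope_root:
  assumes gamma: "0 < gamma" "gamma < 1 / k" "efficiency_slope k f f' gamma = 0"
    and b: "0 < b" "b < 1 / k" "efficiency_slope k f f' b < 0"
  shows "efficiency k f b \<le> efficiency k f gamma"
proof -
  have "x0 < gamma"
    using efficiency_slope_pos_below_x0[of gamma] gamma by force
  moreover have "x0 < b"
    using efficiency_slope_pos_below_x0[of b] b by force
  ultimately have "gamma < b"
    using efficiency_slope_strict_antimono[of b gamma] gamma b
    by (metis less_eq_real_def linorder_not_less not_less_iff_gr_or_eq)
  have "efficiency k f b < efficiency k f gamma"
  proof (rule DERIV_neg_imp_decreasing_open[OF \<open>gamma < b\<close> _ efficiency_continuous])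
    fix x assume x: "gamma < x" "x < b"
    then have "efficiency_slope k f f' x < 0"
      using efficiency_slope_strict_antimono[of gamma x] \<open>x0 < gamma\<close> gamma b by simp
    moreover have "0 < x" using x gamma by simp
    ultimately have "efficiency_slope k f f' x / x\<^sup>2 < 0"
      by (simp add: divide_neg_pos)
    then show "\<exists>y. (efficiency k f has_real_derivative y) (at x) \<and> y < 0"
      using efficiency_has_derivative derivs x gamma
      by (metis less_numeral_extra(3) order_less_trans)
  qed (use gamma in auto)
  then show ?thesis by simp
qed

end

lemma sigmoidal_tendsto_0_at_right:
  assumes "sigmoidal f f' f''"
  shows "(f \<longlongrightarrow> 0) (at_right 0)"
proof -
  have "f 0 = 0" "\<forall>x\<in>{0..}. (f \<longlongrightarrow> f x) (at x within {0..})"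
    using assms unfolding sigmoidal_def continuous_on_def by auto
  then have "(f \<longlongrightarrow> 0) (at 0 within {0..})"
    by (metis atLeast_iff order_refl)
  then have "(f \<longlongrightarrow> 0) (at 0 within {0<..})"
    by (rule tendsto_within_subset) auto
  then show ?thesis by simp
qed

lemma efficiency_slope_neg_at_Nash_SINR:
  assumes "k > 0" "beta > 0" "f' beta > 0" "beta * f' beta - f beta = 0"
  shows "efficiency_slope k f f' beta < 0"
proof -
  have "efficiency_slope k f f' beta = - k * beta\<^sup>2 * f' beta"
    using assms(4) by (simp add: efficiency_slope_def algebra_simps power2_eq_square)
  moreover have "k * beta\<^sup>2 * f' beta > 0"
    using assms by simp
  ultimately show ?thesis by linarith
qed

lemma SINR_symmetric:
  assumes s2: "s2 > 0" and g: "\<forall>i\<in>{1..K}. (cmod (g i))\<^sup>2 > 0"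
    and x: "0 < x" "(real K - 1) * x < 1"
    and p: "\<forall>i. p i = s2 / (cmod (g i))\<^sup>2 * (x / (1 - (real K - 1) * x))"
    and i: "i \<in> {1..K}"
  shows "SINR K s2 g p i = x"
proof -
  define c where "c = x / (1 - (real K - 1) * x)"
  have received: "p j * (cmod (g j))\<^sup>2 = s2 * c" if "j \<in> {1..K}" for j
    using p g that c_def by auto
  have "(\<Sum>j\<in>{1..K} - {i}. p j * (cmod (g j))\<^sup>2) = (real K - 1) * (s2 * c)"
    using i by (simp add: received card_Diff_singleton of_nat_diff)
  then have "SINR K s2 g p i = s2 * c / (s2 * ((real K - 1) * c + 1))"
    unfolding SINR_def using received[OF i] by (simp add: algebra_simps)
  also have "\<dots> = c / ((real K - 1) * c + 1)"
    using s2 by simp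
  also have "\<dots> = x"
    using x unfolding c_def by (simp add: field_simps)
  finally show ?thesis .
qed

lemma utility_symmetric:
  assumes s2: "s2 > 0" and g: "\<forall>i\<in>{1..K}. (cmod (g i))\<^sup>2 > 0"
    and x: "0 < x" "(real K - 1) * x < 1"
    and p: "\<forall>i. p i = s2 / (cmod (g i))\<^sup>2 * (x / (1 - (real K - 1) * x))"
    and i: "i \<in> {1..K}"
  shows "utility K s2 g R f p i = R i * (cmod (g i))\<^sup>2 / s2 * efficiency (real K - 1) f x"
  unfolding utility_def SINR_symmetric[OF assms] using g i s2 x
  by (simp add: efficiency_def p divide_simps)

theorem proposition7:
  fixes K :: nat and s2 :: real and g :: "nat \<Rightarrow> complex" and R Pmax :: "nat \<Rightarrow> real"
    and f f' f'' :: "real \<Rightarrow> real" and beta gamma :: real and pstar ptilde :: "nat \<Rightarrow> real"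
  assumes K2: "K \<ge> 2"
    and s2: "s2 > 0"
    and g: "\<forall>i\<in>{1..K}. (cmod (g i))\<^sup>2 > 0"
    and R: "\<forall>i\<in>{1..K}. R i > 0"
    and sig: "sigmoidal f f' f''"
    and beta_pos: "beta > 0"
    and beta_sol: "beta * f' beta - f beta = 0"
    and beta_uniq: "\<forall>x>0. x * f' x - f x = 0 \<longrightarrow> x = beta"
    and beta_small: "(real K - 1) * beta < 1"
    and x0: "\<exists>x0\<in>{0<..<1 / (real K - 1)}.
              (\<forall>x\<in>{0<..<x0}. f'' x / f' x - 2 * (real K - 1) / (1 - (real K - 1) * x) > 0) \<and>
              (\<forall>x\<in>{x0<..<1 / (real K - 1)}. f'' x / f' x - 2 * (real K - 1) / (1 - (real K - 1) * x) < 0)"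
    and gamma_in: "gamma \<in> {0<..<1 / (real K - 1)}"
    and gamma_sol: "gamma * (1 - (real K - 1) * gamma) * f' gamma - f gamma = 0"
    and gamma_uniq: "\<forall>x\<in>{0<..<1 / (real K - 1)}.
                       x * (1 - (real K - 1) * x) * f' x - f x = 0 \<longrightarrow> x = gamma"
    and pstar_def: "\<forall>i. pstar i = s2 / (cmod (g i))\<^sup>2 * (beta / (1 - (real K - 1) * beta))"
    and ptilde_def: "\<forall>i. ptilde i = s2 / (cmod (g i))\<^sup>2 * (gamma / (1 - (real K - 1) * gamma))"
    and Pmax: "\<forall>i\<in>{1..K}. pstar i \<le> Pmax i \<and> ptilde i \<le> Pmax i"
  shows "\<forall>i\<in>{1..K}. utility K s2 g R f ptilde i \<ge> utility K s2 g R f pstar i"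
proof
  fix i assume i: "i \<in> {1..K}"
  let ?k = "real K - 1"
  have k_pos: "?k > 0" using K2 by simp
  from sig have derivs: "\<forall>x>0. (f has_real_derivative f' x) (at x) \<and> (f' has_real_derivative f'' x) (at x)"
    and f'_pos: "\<forall>x>0. f' x > 0"
    unfolding sigmoidal_def by blast+
  from x0 obtain x0 where "x0 \<in> {0<..<1 / ?k}"
    "\<forall>x\<in>{0<..<x0}. f'' x / f' x - 2 * ?k / (1 - ?k * x) > 0"
    "\<forall>x\<in>{x0<..<1 / ?k}. f'' x / f' x - 2 * ?k / (1 - ?k * x) < 0"
    by blast
  note efficiency_le = efficiency_le_at_slope_root[OF k_pos _ _ sigmoidal_tendsto_0_at_right[OF sig] this]
  have efficiency_ineq: "efficiency ?k f beta \<le> efficiency ?k f gamma"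
  proof (rule efficiency_le)
    show "efficiency_slope ?k f f' beta < 0"
      using efficiency_slope_neg_at_Nash_SINR[OF k_pos beta_pos] beta_sol f'_pos beta_pos by simp
  qed (use derivs f'_pos beta_pos beta_small gamma_in gamma_sol k_pos in
        \<open>auto simp: efficiency_slope_def field_simps\<close>)
  have u_tilde: "utility K s2 g R f ptilde i = R i * (cmod (g i))\<^sup>2 / s2 * efficiency ?k f gamma"
    by (rule utility_symmetric[OF s2 g _ _ ptilde_def i]) (use gamma_in k_pos in \<open>auto simp: field_simps\<close>)
  have u_star: "utility K s2 g R f pstar i = R i * (cmod (g i))\<^sup>2 / s2 * efficiency ?k f beta"
    by (rule utility_symmetric[OF s2 g beta_pos beta_small pstar_def i])
  have "R i * (cmod (g i))\<^sup>2 / s2 \<ge> 0"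
    using R g i s2 by (simp add: less_imp_le)
  then show "utility K s2 g R f ptilde i \<ge> utility K s2 g R f pstar i"
    unfolding u_tilde u_star by (rule mult_left_mono[OF efficiency_ineq])
qed

end
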